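(* (i) $S^t=\exp(t\log S)=\sum_{m\geq 0}\frac{t^m}{m!}(\log S)^m$ as operators on $\mathfrak{h}^1[t]$ (the series being finite on each word). (ii) $S^{t_1+t_2}=S^{t_1}\circ S^{t_2}$ as operators on $\mathfrak{h}^1[t_1,t_2]$, for independent indeterminates $t_1,t_2$; in particular $S^{-t}$ is the inverse of $S^t$. (iii) For every word $w$ of length $n$, \[\frac{d}{dt}S^t(w)=(S^t\circ\log S)(w)=\sum_{r\in R_n,\ \sigma(r)=1}S^t(\mathrm{Con}_r(w)).\]
   Context: Let $\mathfrak{A}$ be a commutative $\mathbb{Q}$-algebra, $A$ a set of letters, and $\mathfrak{h}^1$ the non-commutative polynomial algebra over $\mathfrak{A}$ in the letters of $A$ (the free $\mathfrak{A}$-module on words, i.e. finite sequences of letters including the empty word $1$, with concatenation product). Let $\mathfrak{z}\subset\mathfrak{h}^1$ be the $\mathfrak{A}$-submodule spanned by $A$, and assume $\mathfrak{z}$ carries a commutative associative (not necessarily unital) $\mathfrak{A}$-bilinear product $\circ\colon\mathfrak{z}\times\mathfrak{z}\to\mathfrak{z}$. This is extended to an action of $\mathfrak{z}$ on $\mathfrak{h}^1$ by $a\circ 1=0$ and $a\circ(bw)=(a\circ b)w$ for $a,b\in A$ and words $w$, extended $\mathfrak{A}$-bilinearly. Let $t$ be an indeterminate, $\mathfrak{h}^1[t]=\mathfrak{h}^1\otimes_{\mathbb{Q}}\mathbb{Q}[t]$, with all structures extended $\mathfrak{A}[t]$-linearly. Define the $\mathfrak{A}[t]$-linear operator $S^t$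 on $\mathfrak{h}^1[t]$ by $S^t(1)=1$ and $S^t(aw)=aS^t(w)+t\,a\circ S^t(w)$ for $a\in A$ and words $w$; for an element $\alpha$ of a commutative $\mathfrak{A}$-algebra (e.g. $1$, $-t$, $t_1$, $t_1+t_2$), $S^\alpha$ denotes the operator obtained by substituting $\alpha$ for $t$, and $S=S^1$. $\log S=\sum_{k\geq1}\frac{(-1)^{k-1}}{k}(S-1)^k$ (finite on each word). For $n\geq 0$, let $R_n$ be the set of strictly increasing sequences $r=(r_0,\ldots,r_s)$ of integers in $\{0,\ldots,n\}$ with $r_0=0$, $r_s=n$; put $\sigma(r)=n-s$. For a word $w=a_1\cdots a_n$, $\mathrm{Con}_r(w)=b_1\cdots b_s$ with $b_i=a_{r_{i-1}+1}\circ\cdots\circ a_{r_i}$. *)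

theory Defs
  imports "HOL-Library.Poly_Mapping" "HOL-Computational_Algebra.Polynomial"
begin

text \<open>
  Elements of the non-commutative polynomial algebra over a coefficient ring 'c in the
  letters of type 'l are finitely supported functions from words ('l list) to 'c.
  The submodule z spanned by the letters is represented by finitely supported functions
  'l \<Rightarrow>0 'c.  A product on z is given by its values on pairs of letters (a function
  'l \<Rightarrow> 'l \<Rightarrow> ('l \<Rightarrow>0 'c)) and extended bilinearly.
\<close>

definition smul :: "'c::comm_ring_1 \<Rightarrow> ('a \<Rightarrow>\<^sub>0 'c) \<Rightarrow> ('a \<Rightarrow>\<^sub>0 'c)" where
  "smul c x = Poly_Mapping.map (\<lambda>v. c * v) x"

definition lin_ext :: "('a \<Rightarrow> ('b \<Rightarrow>\<^sub>0 'c::comm_ring_1)) \<Rightarrow> ('a \<Rightarrow>\<^sub>0 'c) \<Rightarrow> ('b \<Rightarrow>\<^sub>0 'c)" where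
  "lin_ext f x = (\<Sum>v\<in>Poly_Mapping.keys x. smul (Poly_Mapping.lookup x v) (f v))"

definition wd :: "'l list \<Rightarrow> ('l list \<Rightarrow>\<^sub>0 'c::comm_ring_1)" where
  "wd w = Poly_Mapping.single w 1"

definition zmult :: "('l \<Rightarrow> 'l \<Rightarrow> ('l \<Rightarrow>\<^sub>0 'c::comm_ring_1)) \<Rightarrow> ('l \<Rightarrow>\<^sub>0 'c) \<Rightarrow> ('l \<Rightarrow>\<^sub>0 'c) \<Rightarrow> ('l \<Rightarrow>\<^sub>0 'c)" where
  "zmult m x y = lin_ext (\<lambda>a. lin_ext (\<lambda>b. m a b) y) x"

definition prepend :: "'l \<Rightarrow> ('l list \<Rightarrow>\<^sub>0 'c::comm_ring_1) \<Rightarrow> ('l list \<Rightarrow>\<^sub>0 'c)" where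
  "prepend a x = lin_ext (\<lambda>u. wd (a # u)) x"

definition act :: "('l \<Rightarrow> 'l \<Rightarrow> ('l \<Rightarrow>\<^sub>0 'c::comm_ring_1)) \<Rightarrow> 'l \<Rightarrow> ('l list \<Rightarrow>\<^sub>0 'c) \<Rightarrow> ('l list \<Rightarrow>\<^sub>0 'c)" where
  "act m a x = lin_ext (\<lambda>u. case u of [] \<Rightarrow> 0 | b # v \<Rightarrow> lin_ext (\<lambda>c. wd (c # v)) (m a b)) x"

fun Sw :: "('l \<Rightarrow> 'l \<Rightarrow> ('l \<Rightarrow>\<^sub>0 'c::comm_ring_1)) \<Rightarrow> 'c \<Rightarrow> 'l list \<Rightarrow> ('l list \<Rightarrow>\<^sub>0 'c)" where
  "Sw m \<alpha> [] = wd []"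
| "Sw m \<alpha> (a # w) = prepend a (Sw m \<alpha> w) + smul \<alpha> (act m a (Sw m \<alpha> w))"

definition Sop :: "('l \<Rightarrow> 'l \<Rightarrow> ('l \<Rightarrow>\<^sub>0 'c::comm_ring_1)) \<Rightarrow> 'c \<Rightarrow> ('l list \<Rightarrow>\<^sub>0 'c) \<Rightarrow> ('l list \<Rightarrow>\<^sub>0 'c)" where
  "Sop m \<alpha> = lin_ext (Sw m \<alpha>)"

definition qinv :: "nat \<Rightarrow> 'c::comm_ring_1" where
  "qinv k = (THE u. of_nat k * u = 1)"

text \<open>log S = sum_{k>=1} (-1)^(k-1)/k (S - 1)^k; on a word w the terms with k > length w
  vanish, so the series is evaluated on w as the finite sum over k = 1..length w\<close>
definition logS :: "('l \<Rightarrow> 'l \<Rightarrow> ('l \<Rightarrow>\<^sub>0 'c::comm_ring_1)) \<Rightarrow> ('l list \<Rightarrow>\<^sub>0 'c) \<Rightarrow> ('l list \<Rightarrow>\<^sub>0 'c)" where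
  "logS m = lin_ext (\<lambda>w. \<Sum>k\<in>{1..length w}.
      smul ((-1) ^ (k - 1) * qinv k) (((\<lambda>x. Sop m 1 x - x) ^^ k) (wd w)))"

text \<open>exp(alpha log S) = sum_{j>=0} alpha^j/j! (log S)^j; on a word w the terms with
  j > length w vanish, so the series is evaluated on w as the finite sum over j = 0..length w\<close>
definition expLogS :: "('l \<Rightarrow> 'l \<Rightarrow> ('l \<Rightarrow>\<^sub>0 'c::comm_ring_1)) \<Rightarrow> 'c \<Rightarrow> ('l list \<Rightarrow>\<^sub>0 'c) \<Rightarrow> ('l list \<Rightarrow>\<^sub>0 'c)" where
  "expLogS m \<alpha> = lin_ext (\<lambda>w. \<Sum>j\<in>{0..length w}.
      smul (\<alpha> ^ j * qinv (fact j)) ((logS m ^^ j) (wd w)))"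

text \<open>extension of scalars along a coefficient map (e.g. A \<rightarrow> A[t])\<close>
definition coeff_map :: "('c::zero \<Rightarrow> 'd::zero) \<Rightarrow> ('a \<Rightarrow>\<^sub>0 'c) \<Rightarrow> ('a \<Rightarrow>\<^sub>0 'd)" where
  "coeff_map f x = Poly_Mapping.map f x"

text \<open>the product on letters with coefficients in A[t], resp. A[t1][t2] = A[t1,t2]\<close>
definition mult_t :: "('l \<Rightarrow> 'l \<Rightarrow> ('l \<Rightarrow>\<^sub>0 'r::comm_ring_1)) \<Rightarrow> 'l \<Rightarrow> 'l \<Rightarrow> ('l \<Rightarrow>\<^sub>0 'r poly)" where
  "mult_t m a b = coeff_map (\<lambda>c. [:c:]) (m a b)"

definition mult_tt :: "('l \<Rightarrow> 'l \<Rightarrow> ('l \<Rightarrow>\<^sub>0 'r::comm_ring_1)) \<Rightarrow> 'l \<Rightarrow> 'l \<Rightarrow> ('l \<Rightarrow>\<^sub>0 'r poly poly)" where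
  "mult_tt m a b = coeff_map (\<lambda>c. [:[:c:]:]) (m a b)"

text \<open>formal derivative d/dt on A[t] (pderiv in the library needs no zero divisors)\<close>
definition dt :: "'r::comm_ring_1 poly \<Rightarrow> 'r poly" where
  "dt p = (\<Sum>i\<le>degree p. monom (of_nat i * coeff p i) (i - 1))"

definition Rseq :: "nat \<Rightarrow> nat list set" where
  "Rseq n = {r. r \<noteq> [] \<and> sorted_wrt (<) r \<and> set r \<subseteq> {0..n} \<and> hd r = 0 \<and> last r = n}"

definition sigma :: "nat \<Rightarrow> nat list \<Rightarrow> nat" where
  "sigma n r = n - (length r - 1)"

fun zprod :: "('l \<Rightarrow> 'l \<Rightarrow> ('l \<Rightarrow>\<^sub>0 'c::comm_ring_1)) \<Rightarrow> 'l list \<Rightarrow> ('l \<Rightarrow>\<^sub>0 'c)" where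
  "zprod m [] = 0"
| "zprod m [a] = Poly_Mapping.single a 1"
| "zprod m (a # b # w) = zmult m (Poly_Mapping.single a 1) (zprod m (b # w))"

fun wprod :: "('l \<Rightarrow>\<^sub>0 'c::comm_ring_1) list \<Rightarrow> ('l list \<Rightarrow>\<^sub>0 'c)" where
  "wprod [] = wd []"
| "wprod (b # bs) = lin_ext (\<lambda>c. prepend c (wprod bs)) b"

text \<open>Con_r(w) = b_1 ... b_s with b_i = a_{r_{i-1}+1} \<circ> ... \<circ> a_{r_i}\<close>
definition Con :: "('l \<Rightarrow> 'l \<Rightarrow> ('l \<Rightarrow>\<^sub>0 'c::comm_ring_1)) \<Rightarrow> nat list \<Rightarrow> 'l list \<Rightarrow> ('l list \<Rightarrow>\<^sub>0 'c)" where
  "Con m r w = wprod (map (\<lambda>i. zprod m (take (r ! (i + 1) - r ! i) (drop (r ! i) w)))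
                          [0..<length r - 1])"

end

theory Submission
  imports Defs "HOL-Computational_Algebra.Formal_Power_Series"
begin

(* Write contr for the operator sending a word a_1...a_n to the sum of the n-1 words obtained by
   contracting one adjacent pair a_i a_(i+1) into a_i \<circ> a_(i+1). *)

section \<open>Linear algebra on finitely supported functions\<close>

lemma lookup_smul [simp]: "Poly_Mapping.lookup (smul c x) v = c * Poly_Mapping.lookup x v"
  by (simp add: smul_def Poly_Mapping.map.rep_eq when_def)

lemma smul_add: "smul c (x + y) = smul c x + smul c y"
  by (rule poly_mapping_eqI) (simp add: lookup_add algebra_simps)

lemma smul_add_left: "smul (c + d) x = smul c x + smul d x"
  by (rule poly_mapping_eqI) (simp add: lookup_add algebra_simps)

lemma smul_smul: "smul c (smul d x) = smul (c * d) x"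
  by (rule poly_mapping_eqI) (simp add: algebra_simps)

lemma smul_one [simp]: "smul 1 x = x"
  by (rule poly_mapping_eqI) simp

lemma smul_zero_left [simp]: "smul 0 x = 0"
  by (rule poly_mapping_eqI) simp

lemma smul_zero [simp]: "smul c 0 = 0"
  by (rule poly_mapping_eqI) simp

lemma smul_sum: "smul c (sum f A) = (\<Sum>a\<in>A. smul c (f a))"
  by (induction A rule: infinite_finite_induct) (auto simp: smul_add)

lemma sum_smul_left: "smul (sum f A) x = (\<Sum>a\<in>A. smul (f a) x)"
  by (induction A rule: infinite_finite_induct) (auto simp: smul_add_left)

lemma keys_smul: "Poly_Mapping.keys (smul c x) \<subseteq> Poly_Mapping.keys x"
  by (auto simp: in_keys_iff)

lemma lin_ext_superset:
  assumes "finite A" "Poly_Mapping.keys x \<subseteq> A"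
  shows "lin_ext f x = (\<Sum>v\<in>A. smul (Poly_Mapping.lookup x v) (f v))"
  unfolding lin_ext_def
  by (rule sum.mono_neutral_left) (use assms in \<open>auto simp: in_keys_iff\<close>)

lemma lin_ext_add: "lin_ext f (x + y) = lin_ext f x + lin_ext f y"
proof -
  let ?A = "Poly_Mapping.keys x \<union> Poly_Mapping.keys y"
  have "Poly_Mapping.keys (x + y) \<subseteq> ?A" by (rule keys_add)
  then show ?thesis
    by (simp add: lin_ext_superset[of ?A] lookup_add smul_add_left sum.distrib)
qed

lemma lin_ext_smul: "lin_ext f (smul c x) = smul c (lin_ext f x)"
  by (simp add: lin_ext_superset[OF _ keys_smul] lin_ext_def[of f x] smul_sum smul_smul)

lemma lin_ext_zero [simp]: "lin_ext f 0 = 0"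
  by (simp add: lin_ext_def)

lemma lin_ext_single [simp]: "lin_ext f (Poly_Mapping.single v c) = smul c (f v)"
  by (subst lin_ext_superset[of "{v}"]) auto

lemma lin_ext_wd [simp]: "lin_ext f (wd v) = f v"
  by (simp add: wd_def)

lemma lin_ext_cong: "(\<And>v. v \<in> Poly_Mapping.keys x \<Longrightarrow> f v = g v) \<Longrightarrow> lin_ext f x = lin_ext g x"
  by (simp add: lin_ext_def)

lemma lin_ext_fadd: "lin_ext (\<lambda>v. f v + g v) x = lin_ext f x + lin_ext g x"
  by (simp add: lin_ext_def smul_add sum.distrib)

lemma lin_ext_fsmul: "lin_ext (\<lambda>v. smul c (f v)) x = smul c (lin_ext f x)"
  by (simp add: lin_ext_def smul_sum smul_smul mult.commute)

lemma lin_ext_fzero [simp]: "lin_ext (\<lambda>v. 0) x = 0"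
  by (simp add: lin_ext_def)

definition linear_op :: "(('a \<Rightarrow>\<^sub>0 'c::comm_ring_1) \<Rightarrow> ('b \<Rightarrow>\<^sub>0 'c)) \<Rightarrow> bool" where
  "linear_op L \<longleftrightarrow> (\<forall>x y. L (x + y) = L x + L y) \<and> (\<forall>c x. L (smul c x) = smul c (L x))"

lemma linear_lin_ext [simp, intro]: "linear_op (lin_ext f)"
  by (simp add: linear_op_def lin_ext_add lin_ext_smul)

lemma linD_add: "linear_op L \<Longrightarrow> L (x + y) = L x + L y"
  by (simp add: linear_op_def)

lemma linD_smul: "linear_op L \<Longrightarrow> L (smul c x) = smul c (L x)"
  by (simp add: linear_op_def)

lemma linD_zero: "linear_op L \<Longrightarrow> L 0 = 0"
  by (metis linD_smul smul_zero_left)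

lemma linD_sum: "linear_op L \<Longrightarrow> L (sum f A) = (\<Sum>a\<in>A. L (f a))"
  by (induction A rule: infinite_finite_induct) (auto simp: linD_zero linD_add)

lemma lin_ext_comp: "linear_op L \<Longrightarrow> L (lin_ext f x) = lin_ext (\<lambda>v. L (f v)) x"
  by (simp add: lin_ext_def linD_sum linD_smul)

lemma lin_ext_wd_id: "lin_ext wd x = x"
proof (rule poly_mapping_eqI)
  fix u
  have "Poly_Mapping.lookup (lin_ext wd x) u
      = (\<Sum>v\<in>Poly_Mapping.keys x. Poly_Mapping.lookup x v * (1 when v = u))"
    by (simp add: lin_ext_def lookup_sum wd_def lookup_single)
  also have "\<dots> = (\<Sum>v\<in>Poly_Mapping.keys x. if v = u then Poly_Mapping.lookup x v else 0)"
    by (rule sum.cong) (auto simp: when_def)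
  also have "\<dots> = Poly_Mapping.lookup x u"
    by (simp add: sum.delta' in_keys_iff)
  finally show "Poly_Mapping.lookup (lin_ext wd x) u = Poly_Mapping.lookup x u" .
qed

lemma lin_expand: "linear_op L \<Longrightarrow> L x = lin_ext (\<lambda>v. L (wd v)) x"
  using lin_ext_comp[of L wd x] by (simp add: lin_ext_wd_id)

lemma lin_eq: "linear_op L \<Longrightarrow> linear_op L' \<Longrightarrow> (\<And>v. L (wd v) = L' (wd v)) \<Longrightarrow> L x = L' x"
  using lin_expand[of L x] lin_expand[of L' x] by simp

lemma linear_compose: "linear_op L \<Longrightarrow> linear_op L' \<Longrightarrow> linear_op (\<lambda>x. L (L' x))"
  by (simp add: linear_op_def)

lemma linear_plus: "linear_op L \<Longrightarrow> linear_op L' \<Longrightarrow> linear_op (\<lambda>x. L x + L' x)"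
  by (simp add: linear_op_def smul_add)

lemma linear_sc: "linear_op L \<Longrightarrow> linear_op (\<lambda>x. smul c (L x))"
  by (simp add: linear_op_def smul_add smul_smul mult.commute)

lemma linear_id [simp, intro]: "linear_op (\<lambda>x. x)"
  by (simp add: linear_op_def)

lemma linear_funpow [intro]:
  fixes L :: "('a \<Rightarrow>\<^sub>0 'c::comm_ring_1) \<Rightarrow> ('a \<Rightarrow>\<^sub>0 'c)"
  shows "linear_op L \<Longrightarrow> linear_op (L ^^ k)"
proof (induction k)
  case 0
  then show ?case by (simp add: linear_op_def funpow_0)
next
  case (Suc k)
  then have "linear_op (\<lambda>x. L ((L ^^ k) x))" by (intro linear_compose[of L "L ^^ k"])
  then show ?case by simp
qed

lemma linear_sum_op: "(\<And>i. linear_op (L i)) \<Longrightarrow> linear_op (\<lambda>x. \<Sum>i\<in>I. L i x)"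
  unfolding linear_op_def by (simp add: sum.distrib smul_sum linD_add linD_smul)

lemma linear_fam: "(\<And>c. linear_op (L c)) \<Longrightarrow> linear_op (\<lambda>x. lin_ext (\<lambda>c. L c x) z)"
  unfolding linear_op_def by (simp add: linD_add linD_smul lin_ext_fadd lin_ext_fsmul)


section \<open>Concatenation, the action of letters and the operators S^\<alpha>\<close>

definition liftw :: "'l list \<Rightarrow> ('l \<Rightarrow>\<^sub>0 'c::comm_ring_1) \<Rightarrow> ('l list \<Rightarrow>\<^sub>0 'c)" where
  "liftw u z = lin_ext (\<lambda>c. wd (c # u)) z"

definition zpre :: "('l \<Rightarrow>\<^sub>0 'c::comm_ring_1) \<Rightarrow> ('l list \<Rightarrow>\<^sub>0 'c) \<Rightarrow> ('l list \<Rightarrow>\<^sub>0 'c)" where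
  "zpre z y = lin_ext (\<lambda>c. prepend c y) z"

definition letter_assoc :: "('l \<Rightarrow> 'l \<Rightarrow> ('l \<Rightarrow>\<^sub>0 'c::comm_ring_1)) \<Rightarrow> bool" where
  "letter_assoc m \<longleftrightarrow> (\<forall>a b d. zmult m (m a b) (Poly_Mapping.single d 1)
                                = zmult m (Poly_Mapping.single a 1) (m b d))"

lemma zmult_single_left: "zmult m (Poly_Mapping.single a 1) y = lin_ext (m a) y"
  by (simp add: zmult_def)

lemma zmult_single_right: "zmult m x (Poly_Mapping.single d 1) = lin_ext (\<lambda>c. m c d) x"
  by (simp add: zmult_def)

lemma letter_assoc_of_assoc:
  assumes "\<And>x y z. zmult m (zmult m x y) z = zmult m x (zmult m y z)"
  shows "letter_assoc m"
  unfolding letter_assoc_def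
proof (intro allI)
  fix a b d
  have "zmult m (Poly_Mapping.single x 1) (Poly_Mapping.single y 1) = m x y" for x y
    by (simp add: zmult_single_left)
  then show "zmult m (m a b) (Poly_Mapping.single d 1) = zmult m (Poly_Mapping.single a 1) (m b d)"
    using assms[of "Poly_Mapping.single a 1" "Poly_Mapping.single b 1" "Poly_Mapping.single d 1"]
    by simp
qed

lemma linear_prepend [simp, intro]: "linear_op (prepend a)"
  by (simp add: prepend_def[abs_def])

lemma prepend_wd [simp]: "prepend a (wd u) = wd (a # u)"
  by (simp add: prepend_def)

lemma linear_act [simp, intro]: "linear_op (act m a)"
  by (simp add: act_def[abs_def])

lemma act_nil [simp]: "act m a (wd []) = 0"
  by (simp add: act_def)

lemma act_cons [simp]: "act m a (wd (b # v)) = liftw v (m a b)"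
  by (simp add: act_def liftw_def)

lemma linear_liftw [simp, intro]: "linear_op (liftw u)"
  by (simp add: liftw_def[abs_def])

lemma linear_Sop [simp, intro]: "linear_op (Sop m \<alpha>)"
  unfolding Sop_def by (rule linear_lin_ext)

lemma Sop_wd [simp]: "Sop m \<alpha> (wd w) = Sw m \<alpha> w"
  by (simp add: Sop_def)

lemma linear_zpre [simp, intro]: "linear_op (zpre z)"
  unfolding zpre_def[abs_def] by (rule linear_fam) simp

lemma act_prepend: "act m a (prepend b y) = zpre (m a b) y"
proof -
  have "linear_op (\<lambda>y. act m a (prepend b y))" by (rule linear_compose) simp_all
  then show ?thesis by (rule lin_eq[OF _ linear_zpre]) (simp add: zpre_def liftw_def)
qed

lemma act_act:
  assumes la: "letter_assoc m"
  shows "act m a (act m b y) = lin_ext (\<lambda>c. act m c y) (m a b)"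
proof -
  have l1: "linear_op (\<lambda>y. act m a (act m b y))" by (rule linear_compose) simp_all
  have l2: "linear_op (\<lambda>y. lin_ext (\<lambda>c. act m c y) (m a b))" by (rule linear_fam) simp
  show ?thesis
  proof (rule lin_eq[OF l1 l2])
    fix u
    show "act m a (act m b (wd u)) = lin_ext (\<lambda>c. act m c (wd u)) (m a b)"
    proof (cases u)
      case Nil
      then show ?thesis by (simp add: linD_zero)
    next
      case (Cons d v)
      have "act m a (act m b (wd u)) = lin_ext (\<lambda>e. liftw v (m a e)) (m b d)"
        by (simp add: Cons liftw_def lin_ext_comp)
      also have "\<dots> = liftw v (lin_ext (m a) (m b d))"
        by (simp add: lin_ext_comp)
      also have "lin_ext (m a) (m b d) = lin_ext (\<lambda>c. m c d) (m a b)"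
        using la unfolding letter_assoc_def by (metis zmult_single_left zmult_single_right)
      finally show ?thesis
        by (simp add: lin_ext_comp Cons)
    qed
  qed
qed

lemma S_prepend: "Sop m \<alpha> (prepend a x) = prepend a (Sop m \<alpha> x) + smul \<alpha> (act m a (Sop m \<alpha> x))"
proof -
  have "linear_op (\<lambda>x. Sop m \<alpha> (prepend a x))" by (rule linear_compose) simp_all
  moreover have "linear_op (\<lambda>x. prepend a (Sop m \<alpha> x) + smul \<alpha> (act m a (Sop m \<alpha> x)))"
    by (rule linear_plus[OF linear_compose linear_sc[OF linear_compose]]) simp_all
  ultimately show ?thesis by (rule lin_eq) simp
qed

lemma S_act:
  assumes la: "letter_assoc m"
  shows "Sop m \<alpha> (act m a y) = act m a (Sop m \<alpha> y)"
proof -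
  have l1: "linear_op (\<lambda>y. Sop m \<alpha> (act m a y))" by (rule linear_compose) simp_all
  have l2: "linear_op (\<lambda>y. act m a (Sop m \<alpha> y))" by (rule linear_compose) simp_all
  show ?thesis
  proof (rule lin_eq[OF l1 l2])
    fix u
    show "Sop m \<alpha> (act m a (wd u)) = act m a (Sop m \<alpha> (wd u))"
    proof (cases u)
      case Nil
      then show ?thesis by (simp add: linD_zero)
    next
      case (Cons b v)
      have "Sop m \<alpha> (act m a (wd u)) = lin_ext (\<lambda>c. Sw m \<alpha> (c # v)) (m a b)"
        by (simp add: Cons liftw_def lin_ext_comp)
      also have "\<dots> = zpre (m a b) (Sw m \<alpha> v) + smul \<alpha> (lin_ext (\<lambda>c. act m c (Sw m \<alpha> v)) (m a b))"
        by (simp add: lin_ext_fadd lin_ext_fsmul zpre_def)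
      also have "\<dots> = act m a (Sop m \<alpha> (wd u))"
        by (simp add: Cons linD_add linD_smul act_prepend act_act[OF la])
      finally show ?thesis .
    qed
  qed
qed

lemma S_add:
  assumes la: "letter_assoc m"
  shows "Sop m \<alpha> (Sop m \<beta> x) = Sop m (\<alpha> + \<beta>) x"
proof -
  have "linear_op (\<lambda>x. Sop m \<alpha> (Sop m \<beta> x))" by (rule linear_compose) simp_all
  then show ?thesis
  proof (rule lin_eq[OF _ linear_Sop])
    fix w
    show "Sop m \<alpha> (Sop m \<beta> (wd w)) = Sop m (\<alpha> + \<beta>) (wd w)"
    proof (induction w)
      case Nil
      then show ?case by simp
    next
      case (Cons a w)
      have "Sop m \<alpha> (Sop m \<beta> (wd (a # w)))
          = Sop m \<alpha> (prepend a (Sw m \<beta> w)) + smul \<beta> (Sop m \<alpha> (act m a (Sw m \<beta> w)))"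
        by (simp add: linD_add linD_smul)
      also have "\<dots> = prepend a (Sw m (\<alpha> + \<beta>) w) + smul (\<alpha> + \<beta>) (act m a (Sw m (\<alpha> + \<beta>) w))"
        using Cons by (simp add: S_prepend S_act[OF la] smul_add_left add.assoc)
      finally show ?case by simp
    qed
  qed
qed

lemma S_zero: "Sop m 0 x = x"
proof (rule lin_eq[OF linear_Sop linear_id])
  fix w
  show "Sop m 0 (wd w) = wd w" by (induction w) simp_all
qed


section \<open>The contraction operator\<close>

text \<open>contr(a_1...a_n) = \<Sum>_i a_1...(a_i \<circ> a_(i+1))...a_n, defined by the recursion
  contr(a w) = a contr(w) + a \<circ> w.\<close>
fun contr_w :: "('l \<Rightarrow> 'l \<Rightarrow> ('l \<Rightarrow>\<^sub>0 'c::comm_ring_1)) \<Rightarrow> 'l list \<Rightarrow> ('l list \<Rightarrow>\<^sub>0 'c)" where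
  "contr_w m [] = 0"
| "contr_w m (a # w) = prepend a (contr_w m w) + act m a (wd w)"

definition contr :: "('l \<Rightarrow> 'l \<Rightarrow> ('l \<Rightarrow>\<^sub>0 'c::comm_ring_1)) \<Rightarrow> ('l list \<Rightarrow>\<^sub>0 'c) \<Rightarrow> ('l list \<Rightarrow>\<^sub>0 'c)" where
  "contr m = lin_ext (contr_w m)"

lemma linear_contr [simp, intro]: "linear_op (contr m)"
  by (simp add: contr_def)

lemma contr_wd [simp]: "contr m (wd w) = contr_w m w"
  by (simp add: contr_def)

lemma contr_prepend: "contr m (prepend a x) = prepend a (contr m x) + act m a x"
proof -
  have "linear_op (\<lambda>x. contr m (prepend a x))" by (rule linear_compose) simp_all
  moreover have "linear_op (\<lambda>x. prepend a (contr m x) + act m a x)"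
    by (rule linear_plus[OF linear_compose]) simp_all
  ultimately show ?thesis by (rule lin_eq) simp
qed

lemma contr_act:
  assumes la: "letter_assoc m"
  shows "contr m (act m a y) = act m a (contr m y)"
proof -
  have l1: "linear_op (\<lambda>y. contr m (act m a y))" by (rule linear_compose) simp_all
  have l2: "linear_op (\<lambda>y. act m a (contr m y))" by (rule linear_compose) simp_all
  show ?thesis
  proof (rule lin_eq[OF l1 l2])
    fix u
    show "contr m (act m a (wd u)) = act m a (contr m (wd u))"
    proof (cases u)
      case Nil
      then show ?thesis by (simp add: linD_zero)
    next
      case (Cons b v)
      have "contr m (act m a (wd u)) = lin_ext (\<lambda>c. contr_w m (c # v)) (m a b)"
        by (simp add: Cons liftw_def lin_ext_comp)
      also have "\<dots> = zpre (m a b) (contr_w m v) + lin_ext (\<lambda>c. act m c (wd v)) (m a b)"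
        by (simp add: lin_ext_fadd zpre_def)
      also have "\<dots> = act m a (contr m (wd u))"
        by (simp add: Cons linD_add act_prepend act_act[OF la])
      finally show ?thesis .
    qed
  qed
qed

lemma contr_pow_prepend:
  assumes la: "letter_assoc m"
  shows "(contr m ^^ Suc j) (prepend a x)
       = prepend a ((contr m ^^ Suc j) x) + smul (of_nat (Suc j)) (act m a ((contr m ^^ j) x))"
proof (induction j)
  case 0
  then show ?case by (simp add: contr_prepend)
next
  case (Suc j)
  have "(contr m ^^ Suc (Suc j)) (prepend a x) = contr m ((contr m ^^ Suc j) (prepend a x))"
    by simp
  also have "\<dots> = prepend a ((contr m ^^ Suc (Suc j)) x) + act m a ((contr m ^^ Suc j) x)
       + smul (of_nat (Suc j)) (act m a ((contr m ^^ Suc j) x))"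
    by (simp only: Suc) (simp add: linD_add linD_smul contr_prepend contr_act[OF la])
  also have "\<dots> = prepend a ((contr m ^^ Suc (Suc j)) x)
       + smul (of_nat (Suc (Suc j))) (act m a ((contr m ^^ Suc j) x))"
    using smul_add_left[of 1 "of_nat (Suc j)" "act m a ((contr m ^^ Suc j) x)"]
    by (simp only: of_nat_Suc[of "Suc j"] add.commute[of 1] smul_one add.assoc)
  finally show ?case .
qed

text \<open>contr shortens words, hence is nilpotent on every element: words_shorter k y says that every
  word in the support of y has length less than k.\<close>
definition words_shorter :: "nat \<Rightarrow> ('l list \<Rightarrow>\<^sub>0 'c::zero) \<Rightarrow> bool" where
  "words_shorter k y \<longleftrightarrow> (\<forall>u\<in>Poly_Mapping.keys y. length u < k)"

lemma words_shorter_mono: "words_shorter k y \<Longrightarrow> k \<le> k' \<Longrightarrow> words_shorter k' y"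
  by (auto simp: words_shorter_def)

lemma keys_wd [simp]: "Poly_Mapping.keys (wd u :: 'l list \<Rightarrow>\<^sub>0 'c::comm_ring_1) = {u}"
  by (simp add: wd_def)

lemma words_shorter_zero [simp]: "words_shorter k 0"
  by (simp add: words_shorter_def)

lemma words_shorter_wd [simp]: "words_shorter k (wd u) \<longleftrightarrow> length u < k"
  by (simp add: words_shorter_def)

lemma words_shorter_exists: "\<exists>k. words_shorter k y"
proof -
  obtain k where "\<forall>u\<in>Poly_Mapping.keys y. length u \<le> k"
    by (meson finite_imageI finite_keys finite_nat_set_iff_bounded_le imageI)
  then have "words_shorter (Suc k) y" by (auto simp: words_shorter_def less_Suc_eq_le)
  then show ?thesis ..
qed

lemma words_shorter_add: "words_shorter k x \<Longrightarrow> words_shorter k y \<Longrightarrow> words_shorter k (x + y)"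
  using keys_add[of x y] by (auto simp: words_shorter_def)

lemma words_shorter_smul: "words_shorter k x \<Longrightarrow> words_shorter k (smul c x)"
  using keys_smul[of c x] by (auto simp: words_shorter_def)

lemma words_shorter_sum: "(\<And>i. i \<in> I \<Longrightarrow> words_shorter k (f i)) \<Longrightarrow> words_shorter k (sum f I)"
  by (induction I rule: infinite_finite_induct) (auto intro: words_shorter_add)

lemma words_shorter_lin_ext:
  "(\<And>v. v \<in> Poly_Mapping.keys x \<Longrightarrow> words_shorter k (f v)) \<Longrightarrow> words_shorter k (lin_ext f x)"
  unfolding lin_ext_def by (rule words_shorter_sum) (auto intro: words_shorter_smul)

lemma words_shorter_contr_w: "words_shorter (length w) (contr_w m w)"
proof (induction w)
  case (Cons a w)
  have "words_shorter (Suc (length w)) (prepend a (contr_w m w))"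
    unfolding prepend_def using Cons by (intro words_shorter_lin_ext) (auto simp: words_shorter_def)
  moreover have "words_shorter (Suc (length w)) (act m a (wd w))"
    by (cases w) (auto simp: liftw_def intro!: words_shorter_lin_ext)
  ultimately show ?case by (simp add: words_shorter_add)
qed simp

lemma words_shorter_contr: "words_shorter (Suc k) y \<Longrightarrow> words_shorter k (contr m y)"
  unfolding contr_def
  by (rule words_shorter_lin_ext, rule words_shorter_mono[OF words_shorter_contr_w])
     (auto simp: words_shorter_def)

lemma words_shorter_contr_pow: "words_shorter k y \<Longrightarrow> words_shorter k ((contr m ^^ j) y)"
proof (induction j)
  case (Suc j)
  have "words_shorter (Suc k) ((contr m ^^ j) y)"
    using Suc.IH[OF Suc.prems] by (rule words_shorter_mono) simp
  then show ?case by (simp add: words_shorter_contr)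
qed simp

lemma contr_pow_vanish: "words_shorter k y \<Longrightarrow> k \<le> j \<Longrightarrow> (contr m ^^ j) y = 0"
proof (induction k arbitrary: y j)
  case 0
  then have "y = 0" by (auto simp: words_shorter_def)
  then show ?case by (simp add: linD_zero linear_funpow)
next
  case (Suc k)
  then obtain i where j: "j = Suc i" "k \<le> i" by (cases j) auto
  have "(contr m ^^ j) y = (contr m ^^ i) (contr m y)"
    by (simp only: j funpow_Suc_right comp_apply)
  also have "\<dots> = 0" using Suc words_shorter_contr j by blast
  finally show ?case .
qed


section \<open>Power series in the contraction operator and the exponential formula\<close>

definition qalg :: "'c::comm_ring_1 itself \<Rightarrow> bool" where
  "qalg _ \<longleftrightarrow> (\<forall>k::nat. k > 0 \<longrightarrow> (\<exists>u::'c. of_nat k * u = 1))"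

lemma qinv_eq: "of_nat k * (u::'c::comm_ring_1) = 1 \<Longrightarrow> qinv k = u"
  unfolding qinv_def
proof (rule the_equality)
  fix v :: 'c
  assume "of_nat k * u = 1" "of_nat k * v = 1"
  then have "v = (of_nat k * v) * u" by (metis mult.left_commute mult.right_neutral)
  then show "v = u" using \<open>of_nat k * v = 1\<close> by simp
qed

lemma qinv_mult: "qalg TYPE('c::comm_ring_1) \<Longrightarrow> k > 0 \<Longrightarrow> of_nat k * (qinv k :: 'c) = 1"
  unfolding qalg_def by (metis qinv_eq)

lemma qinv_fact_Suc:
  assumes q: "qalg TYPE('c::comm_ring_1)"
  shows "of_nat (Suc j) * (qinv (fact (Suc j)) :: 'c) = qinv (fact j)"
proof (rule qinv_eq[symmetric])
  have "of_nat (fact j) * (of_nat (Suc j) * (qinv (fact (Suc j)) :: 'c))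
      = of_nat (fact (Suc j)) * qinv (fact (Suc j))"
    by (simp add: algebra_simps)
  also have "\<dots> = 1" by (rule qinv_mult[OF q]) simp
  finally show "of_nat (fact j) * (of_nat (Suc j) * (qinv (fact (Suc j)) :: 'c)) = 1" .
qed

lemma qinv_Suc0 [simp]: "qinv (Suc 0) = (1::'c::comm_ring_1)"
  by (rule qinv_eq) simp

unbundle fps_syntax

text \<open>p(contr) y for a formal power series p, truncated at degree N; this is exact as soon as
  contr^(N+1) y = 0.\<close>
definition series_at :: "('l \<Rightarrow> 'l \<Rightarrow> ('l \<Rightarrow>\<^sub>0 'c::comm_ring_1)) \<Rightarrow> nat \<Rightarrow> 'c fps
    \<Rightarrow> ('l list \<Rightarrow>\<^sub>0 'c) \<Rightarrow> ('l list \<Rightarrow>\<^sub>0 'c)" where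
  "series_at m N p y = (\<Sum>j\<le>N. smul (p $ j) ((contr m ^^ j) y))"

lemma linear_series_at [simp, intro]: "linear_op (series_at m N p)"
  unfolding series_at_def[abs_def] by (rule linear_sum_op, rule linear_sc, rule linear_funpow) simp

lemma series_at_add: "series_at m N (p + q) y = series_at m N p y + series_at m N q y"
  by (simp add: series_at_def smul_add_left sum.distrib)

lemma series_at_const: "series_at m N (fps_const c * p) y = smul c (series_at m N p y)"
  by (simp add: series_at_def smul_sum smul_smul)

lemma series_at_zero [simp]: "series_at m N 0 y = 0"
  by (simp add: series_at_def)

lemma series_at_sum: "series_at m N (\<Sum>k\<in>K. f k) y = (\<Sum>k\<in>K. series_at m N (f k) y)"
  by (induction K rule: infinite_finite_induct) (simp_all add: series_at_add)

lemma series_at_one: "series_at m N 1 y = y"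
proof -
  have "series_at m N 1 y = (\<Sum>j\<le>N. if j = 0 then y else 0)"
    unfolding series_at_def by (rule sum.cong) auto
  then show ?thesis by simp
qed

lemma words_shorter_series_at: "words_shorter k y \<Longrightarrow> words_shorter k (series_at m N p y)"
  unfolding series_at_def by (intro words_shorter_sum words_shorter_smul words_shorter_contr_pow)

lemma series_at_trunc:
  assumes short: "words_shorter (Suc N) y" and "N \<le> M"
  shows "series_at m M p y = series_at m N p y"
  unfolding series_at_def
proof (rule sum.mono_neutral_right)
  have "(contr m ^^ i) y = 0" if "N < i" for i
    using contr_pow_vanish[OF short] that by simp
  then show "\<forall>i\<in>{..M} - {..N}. smul (p $ i) ((contr m ^^ i) y) = 0" by auto
qed (use \<open>N \<le> M\<close> in auto)

lemma series_at_mult: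
  assumes z: "words_shorter (Suc N) y"
  shows "series_at m N p (series_at m N q y) = series_at m N (p * q) y"
proof -
  define T where "T i j = smul (p $ i * q $ j) ((contr m ^^ (i + j)) y)" for i j
  have T0: "T i j = 0" if "N < i + j" for i j
    using contr_pow_vanish[OF z] that by (simp add: T_def)
  have "series_at m N p (series_at m N q y) = (\<Sum>i\<le>N. \<Sum>j\<le>N. T i j)"
    unfolding series_at_def T_def
    by (simp add: linD_sum[OF linear_funpow] linD_smul[OF linear_funpow] smul_sum smul_smul funpow_add)
  also have "\<dots> = (\<Sum>(i, j)\<in>{..N} \<times> {..N}. T i j)"
    by (simp add: sum.cartesian_product)
  also have "\<dots> = (\<Sum>(i, j)\<in>{(i, j). i + j \<le> N}. T i j)"
    by (rule sum.mono_neutral_right) (auto simp: not_le intro!: T0)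
  also have "\<dots> = (\<Sum>k\<le>N. \<Sum>i\<le>k. T i (k - i))"
    by (rule sum.triangle_reindex_eq)
  also have "\<dots> = series_at m N (p * q) y"
    unfolding series_at_def fps_mult_nth T_def
    by (rule sum.cong[OF refl]) (simp add: sum_smul_left atLeast0AtMost)
  finally show ?thesis .
qed

definition expser :: "'c::comm_ring_1 \<Rightarrow> 'c fps" where
  "expser \<alpha> = Abs_fps (\<lambda>j. \<alpha> ^ j * qinv (fact j))"

lemma expser_Suc:
  assumes q: "qalg TYPE('c::comm_ring_1)"
  shows "of_nat (Suc j) * expser (\<alpha>::'c) $ Suc j = \<alpha> * expser \<alpha> $ j"
  using qinv_fact_Suc[OF q, of j] by (simp add: expser_def ac_simps del: fact_Suc)

lemma series_expser_prepend:
  assumes la: "letter_assoc m" and q: "qalg TYPE('c::comm_ring_1)"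
  shows "series_at m (Suc M) (expser (\<alpha>::'c)) (prepend a y)
       = prepend a (series_at m (Suc M) (expser \<alpha>) y) + smul \<alpha> (act m a (series_at m M (expser \<alpha>) y))"
proof -
  define c where "c j = expser \<alpha> $ j" for j
  have coef: "c (Suc i) * of_nat (Suc i) = \<alpha> * c i" for i
    using expser_Suc[OF q] by (simp add: c_def mult.commute)
  let ?C = "contr m"
  have "series_at m (Suc M) (expser \<alpha>) (prepend a y)
      = smul (c 0) (prepend a y) + (\<Sum>i\<le>M. smul (c (Suc i)) ((?C ^^ Suc i) (prepend a y)))"
    by (simp only: series_at_def c_def[symmetric] sum.atMost_Suc_shift funpow_0)
  also have "\<dots> = smul (c 0) (prepend a y) + (\<Sum>i\<le>M. smul (c (Suc i)) (prepend a ((?C ^^ Suc i) y)))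
      + (\<Sum>i\<le>M. smul (\<alpha> * c i) (act m a ((?C ^^ i) y)))"
    by (simp only: contr_pow_prepend[OF la] smul_add smul_smul coef sum.distrib add.assoc)
  also have "smul (c 0) (prepend a y) + (\<Sum>i\<le>M. smul (c (Suc i)) (prepend a ((?C ^^ Suc i) y)))
      = prepend a (\<Sum>j\<le>Suc M. smul (c j) ((?C ^^ j) y))"
    by (simp only: sum.atMost_Suc_shift funpow_0 linD_add[OF linear_prepend]
        linD_sum[OF linear_prepend] linD_smul[OF linear_prepend])
  also have "(\<Sum>i\<le>M. smul (\<alpha> * c i) (act m a ((?C ^^ i) y)))
      = smul \<alpha> (act m a (\<Sum>i\<le>M. smul (c i) ((?C ^^ i) y)))"
    by (simp add: linD_sum linD_smul smul_sum smul_smul)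
  finally show ?thesis by (simp add: series_at_def c_def)
qed

lemma Sw_exp:
  assumes la: "letter_assoc m" and q: "qalg TYPE('c::comm_ring_1)"
  shows "Sw m (\<alpha>::'c) w = series_at m (length w) (expser \<alpha>) (wd w)"
proof (induction w)
  case Nil
  then show ?case by (simp add: series_at_def expser_def)
next
  case (Cons a w)
  have "series_at m (Suc (length w)) (expser \<alpha>) (wd w) = series_at m (length w) (expser \<alpha>) (wd w)"
    by (rule series_at_trunc) simp_all
  then show ?case
    using series_expser_prepend[OF la q, of "length w" \<alpha> a "wd w"] Cons by simp
qed

theorem S_exp:
  assumes la: "letter_assoc m" and q: "qalg TYPE('c::comm_ring_1)"
    and short: "words_shorter (Suc N) y"
  shows "Sop m (\<alpha>::'c) y = series_at m N (expser \<alpha>) y"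
proof -
  have "Sop m \<alpha> y = lin_ext (\<lambda>v. series_at m N (expser \<alpha>) (wd v)) y"
    unfolding Sop_def
  proof (rule lin_ext_cong)
    fix v
    assume "v \<in> Poly_Mapping.keys y"
    then have "length v \<le> N" using short by (auto simp: words_shorter_def)
    then show "Sw m \<alpha> v = series_at m N (expser \<alpha>) (wd v)"
      by (simp add: Sw_exp[OF la q] series_at_trunc[of "length v" "wd v" N])
  qed
  also have "\<dots> = series_at m N (expser \<alpha>) y"
    by (rule lin_expand[OF linear_series_at, symmetric])
  finally show ?thesis .
qed


section \<open>The logarithm of S\<close>

definition expm1 :: "'c::comm_ring_1 fps" where
  "expm1 = expser 1 - 1"

lemma expm1_nth: "expm1 $ j = (if j = 0 then 0 else qinv (fact j))"
  by (simp add: expm1_def expser_def)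

lemma expm1_deriv:
  assumes q: "qalg TYPE('c::comm_ring_1)"
  shows "fps_deriv (expm1 :: 'c fps) = 1 + expm1"
proof (rule fps_ext)
  fix j
  show "fps_deriv (expm1 :: 'c fps) $ j = (1 + expm1) $ j"
    using qinv_fact_Suc[OF q, of j] by (simp add: expm1_nth del: fact_Suc)
qed

text \<open>S - 1 = (e^X - 1)(contr), hence (S - 1)^k = (e^X - 1)^k(contr).\<close>
lemma S_minus_pow:
  assumes la: "letter_assoc m" and q: "qalg TYPE('c::comm_ring_1)"
    and short: "words_shorter (Suc N) (y::'l list \<Rightarrow>\<^sub>0 'c)"
  shows "((\<lambda>x. Sop m 1 x - x) ^^ k) y = series_at m N (expm1 ^ k) y"
proof (induction k)
  case 0
  then show ?case by (simp add: series_at_one)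
next
  case (Suc k)
  let ?y = "series_at m N (expm1 ^ k) y"
  have short': "words_shorter (Suc N) ?y" by (rule words_shorter_series_at[OF short])
  have "Sop m 1 ?y = series_at m N (1 + expm1) ?y"
    unfolding S_exp[OF la q short'] by (simp add: expm1_def)
  then have "Sop m 1 ?y - ?y = series_at m N expm1 ?y"
    by (simp add: series_at_add series_at_one)
  also have "\<dots> = series_at m N (expm1 ^ Suc k) y"
    by (simp add: series_at_mult[OF short])
  finally show ?case using Suc by simp
qed

text \<open>The truncation of log(1 + (e^X - 1)) = \<Sum>_k (-1)^(k-1)/k (e^X - 1)^k used by logS.\<close>
definition log_expm1 :: "nat \<Rightarrow> 'c::comm_ring_1 fps" where
  "log_expm1 n = (\<Sum>k\<in>{1..n}. fps_const ((-1) ^ (k - 1) * qinv k) * expm1 ^ k)"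

lemma log_expm1_term_deriv:
  assumes q: "qalg TYPE('c::comm_ring_1)" and k: "k \<ge> 1"
  shows "fps_deriv (fps_const ((-1) ^ (k - 1) * qinv k) * (expm1 :: 'c fps) ^ k)
       = (1 + expm1) * (- expm1) ^ (k - 1)"
proof -
  have "qinv k * of_nat k = (1::'c)" using qinv_mult[OF q, of k] k by (simp add: mult.commute)
  then have c: "(-1) ^ (k - 1) * qinv k * of_nat k = ((-1) ^ (k - 1) :: 'c)"
    by (simp only: mult.assoc) simp
  have "fps_deriv (fps_const ((-1) ^ (k - 1) * qinv k) * (expm1 :: 'c fps) ^ k)
      = fps_const ((-1) ^ (k - 1) * qinv k) * (of_nat k * (1 + expm1) * expm1 ^ (k - 1))"
    by (simp add: fps_deriv_power' expm1_deriv[OF q])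
  also have "\<dots> = (1 + expm1) * (fps_const ((-1) ^ (k - 1) * qinv k * of_nat k) * expm1 ^ (k - 1))"
    by (simp add: fps_of_nat[symmetric] fps_const_mult[symmetric] ac_simps del: fps_const_mult)
  also have "\<dots> = (1 + expm1) * (- expm1) ^ (k - 1)"
    by (simp only: c) (simp add: power_minus[of expm1] fps_const_neg[symmetric] fps_const_power[symmetric])
  finally show ?thesis .
qed

text \<open>The formal identity log(e^X) = X, up to order n: by comparing derivatives, since
  (1 + E) \<Sum>_(k<n) (-E)^k = 1 - (-E)^n for E = e^X - 1 and E^n has order n.\<close>
lemma log_expm1_nth:
  assumes q: "qalg TYPE('c::comm_ring_1)" and j: "j \<le> n"
  shows "(log_expm1 n :: 'c fps) $ j = (if j = 1 then 1 else 0)"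
proof (cases j)
  case 0
  have "(expm1 ^ k :: 'c fps) $ 0 = 0" if "k \<in> {1..n}" for k
    using that by (intro startsby_zero_power) (auto simp: expm1_nth)
  then show ?thesis using 0 by (simp add: log_expm1_def fps_sum_nth)
next
  case (Suc i)
  have "fps_deriv (log_expm1 n :: 'c fps) = (\<Sum>k\<in>{1..n}. (1 + expm1) * (- expm1) ^ (k - 1))"
    unfolding log_expm1_def fps_deriv_sum
    by (rule sum.cong[OF refl], rule log_expm1_term_deriv[OF q]) auto
  also have "\<dots> = (1 + expm1) * (\<Sum>k<n. (- expm1) ^ k)"
    by (simp add: sum.atLeast1_atMost_eq sum_distrib_left)
  also have "\<dots> = 1 - (- expm1) ^ n"
    by (simp add: one_diff_power_eq[of "- expm1" n])
  finally have d: "fps_deriv (log_expm1 n :: 'c fps) = 1 - (- expm1) ^ n" .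
  have "((- expm1) ^ n :: 'c fps) $ i = 0"
    using startsby_zero_power_prefix[of "- expm1 :: 'c fps" n] j Suc by (simp add: expm1_nth)
  then have "of_nat (Suc i) * (log_expm1 n :: 'c fps) $ Suc i = (if i = 0 then 1 else 0)"
    using arg_cong[OF d, of "\<lambda>f. f $ i"] by simp
  then have "qinv (Suc i) * (of_nat (Suc i) * (log_expm1 n :: 'c fps) $ Suc i)
           = qinv (Suc i) * (if i = 0 then 1 else 0)"
    by simp
  then show ?thesis
    using qinv_mult[OF q, of "Suc i"] Suc
    by (simp add: mult.assoc[symmetric] mult.commute[of "qinv (Suc i)"] split: if_splits)
qed

theorem logS_eq_contr:
  assumes la: "letter_assoc m" and q: "qalg TYPE('c::comm_ring_1)"
  shows "logS m (x :: 'l list \<Rightarrow>\<^sub>0 'c) = contr m x"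
proof (rule lin_eq[OF _ linear_contr])
  show "linear_op (logS m :: ('l list \<Rightarrow>\<^sub>0 'c) \<Rightarrow> _)"
    unfolding logS_def by (rule linear_lin_ext)
next
  fix w :: "'l list"
  let ?n = "length w"
  have short: "words_shorter (Suc ?n) (wd w :: 'l list \<Rightarrow>\<^sub>0 'c)" by simp
  have "logS m (wd w :: 'l list \<Rightarrow>\<^sub>0 'c)
      = (\<Sum>k\<in>{1..?n}. series_at m ?n (fps_const ((-1) ^ (k - 1) * qinv k) * expm1 ^ k) (wd w))"
    by (simp add: logS_def S_minus_pow[OF la q short] series_at_const)
  also have "\<dots> = series_at m ?n (log_expm1 ?n) (wd w)"
    by (simp add: log_expm1_def series_at_sum)
  also have "\<dots> = (\<Sum>j\<le>?n. if j = 1 then contr m (wd w) else 0)"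
    unfolding series_at_def by (rule sum.cong) (auto simp: log_expm1_nth[OF q])
  also have "\<dots> = contr m (wd w)"
    by (cases w) (simp_all add: sum.delta[OF finite_atMost])
  finally show "logS m (wd w :: 'l list \<Rightarrow>\<^sub>0 'c) = contr m (wd w)" .
qed

theorem expLogS_eq_S:
  assumes la: "letter_assoc m" and q: "qalg TYPE('c::comm_ring_1)"
  shows "expLogS m (\<alpha>::'c) x = Sop m \<alpha> x"
proof -
  have "logS m = contr m" by (rule ext) (rule logS_eq_contr[OF la q])
  then have "expLogS m \<alpha> x = lin_ext (\<lambda>w. series_at m (length w) (expser \<alpha>) (wd w)) x"
    by (simp add: expLogS_def series_at_def expser_def atLeast0AtMost)
  also have "\<dots> = lin_ext (Sw m \<alpha>) x"
    by (rule lin_ext_cong) (simp add: Sw_exp[OF la q])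
  finally show ?thesis by (simp only: Sop_def)
qed


section \<open>Extension of scalars\<close>

definition rhom :: "('c::comm_ring_1 \<Rightarrow> 'd::comm_ring_1) \<Rightarrow> bool" where
  "rhom h \<longleftrightarrow> h 0 = 0 \<and> (\<forall>a b. h (a + b) = h a + h b) \<and> (\<forall>a b. h (a * b) = h a * h b) \<and> h 1 = 1"

definition mapm :: "('c \<Rightarrow> 'd) \<Rightarrow> ('l \<Rightarrow> 'l \<Rightarrow> ('l \<Rightarrow>\<^sub>0 'c::comm_ring_1)) \<Rightarrow> 'l \<Rightarrow> 'l \<Rightarrow> ('l \<Rightarrow>\<^sub>0 'd::comm_ring_1)" where
  "mapm h m a b = coeff_map h (m a b)"

lemma lookup_cm: "h 0 = 0 \<Longrightarrow> Poly_Mapping.lookup (coeff_map h x) k = h (Poly_Mapping.lookup x k)"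
  by (simp add: coeff_map_def Poly_Mapping.map.rep_eq when_def)

lemma keys_cm: "h 0 = 0 \<Longrightarrow> Poly_Mapping.keys (coeff_map h x) \<subseteq> Poly_Mapping.keys x"
  by (auto simp: in_keys_iff lookup_cm)

lemma cm_add: "h 0 = 0 \<Longrightarrow> (\<And>a b. h (a + b) = h a + h b) \<Longrightarrow> coeff_map h (x + y) = coeff_map h x + coeff_map h y"
  by (rule poly_mapping_eqI) (simp add: lookup_cm lookup_add)

lemma cm_zero [simp]: "h 0 = 0 \<Longrightarrow> coeff_map h 0 = 0"
  by (rule poly_mapping_eqI) (simp add: lookup_cm)

lemma cm_sum: "h 0 = 0 \<Longrightarrow> (\<And>a b. h (a + b) = h a + h b) \<Longrightarrow> coeff_map h (sum f A) = (\<Sum>a\<in>A. coeff_map h (f a))"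
  by (induction A rule: infinite_finite_induct) (simp_all add: cm_add)

lemma cm_smul: "rhom h \<Longrightarrow> coeff_map h (smul c x) = smul (h c) (coeff_map h x)"
  by (rule poly_mapping_eqI) (simp add: lookup_cm rhom_def)

lemma cm_single: "h 0 = 0 \<Longrightarrow> coeff_map h (Poly_Mapping.single k c) = Poly_Mapping.single k (h c)"
  by (rule poly_mapping_eqI) (simp add: lookup_cm lookup_single when_def)

lemma cm_wd [simp]: "rhom h \<Longrightarrow> coeff_map h (wd w) = wd w"
  by (simp add: wd_def cm_single rhom_def)

lemma cm_lin_ext:
  assumes h: "rhom h"
  shows "coeff_map h (lin_ext f x) = lin_ext (\<lambda>v. coeff_map h (f v)) (coeff_map h x)"
proof -
  have h0: "h 0 = 0" using h by (simp add: rhom_def)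
  have "lin_ext (\<lambda>v. coeff_map h (f v)) (coeff_map h x)
      = (\<Sum>v\<in>Poly_Mapping.keys x. smul (Poly_Mapping.lookup (coeff_map h x) v) (coeff_map h (f v)))"
    by (rule lin_ext_superset[OF _ keys_cm[of h x, OF h0]]) simp
  also have "\<dots> = coeff_map h (lin_ext f x)"
    using h by (simp add: lin_ext_def cm_sum rhom_def cm_smul lookup_cm)
  finally show ?thesis by simp
qed

lemma cm_act: "rhom h \<Longrightarrow> coeff_map h (act m a x) = act (mapm h m) a (coeff_map h x)"
proof -
  assume h: "rhom h"
  have "coeff_map h (act m a x) = lin_ext (\<lambda>u. coeff_map h (case u of [] \<Rightarrow> 0
      | b # v \<Rightarrow> lin_ext (\<lambda>c. wd (c # v)) (m a b))) (coeff_map h x)"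
    unfolding act_def by (rule cm_lin_ext[OF h])
  also have "\<dots> = act (mapm h m) a (coeff_map h x)"
    unfolding act_def
    by (rule lin_ext_cong, rename_tac u, case_tac u) (use h in \<open>simp_all add: rhom_def cm_lin_ext mapm_def\<close>)
  finally show ?thesis .
qed

lemma cm_contr: "rhom h \<Longrightarrow> coeff_map h (contr m x) = contr (mapm h m) (coeff_map h x)"
proof -
  assume h: "rhom h"
  have "coeff_map h (contr_w m w) = contr_w (mapm h m) w" for w
    using h by (induction w) (simp_all add: cm_add rhom_def prepend_def cm_lin_ext cm_act)
  then show ?thesis by (simp add: contr_def cm_lin_ext[OF h])
qed

lemma cm_contr_pow: "rhom h \<Longrightarrow> coeff_map h ((contr m ^^ j) x) = (contr (mapm h m) ^^ j) (coeff_map h x)"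
  by (induction j) (simp_all add: cm_contr)

lemma letter_assoc_mapm:
  assumes h: "rhom h" and la: "letter_assoc m"
  shows "letter_assoc (mapm h m)"
  unfolding letter_assoc_def
proof (intro allI)
  fix a b d
  have s: "coeff_map h (Poly_Mapping.single x 1) = Poly_Mapping.single x 1" for x
    using h by (simp add: cm_single rhom_def)
  have cm_zmult: "coeff_map h (zmult m x y) = zmult (mapm h m) (coeff_map h x) (coeff_map h y)" for x y
    by (simp add: zmult_def cm_lin_ext[OF h] mapm_def)
  have "zmult (mapm h m) (mapm h m a b) (Poly_Mapping.single d 1)
      = coeff_map h (zmult m (m a b) (Poly_Mapping.single d 1))"
    by (simp add: cm_zmult s mapm_def)
  also have "\<dots> = coeff_map h (zmult m (Poly_Mapping.single a 1) (m b d))"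
    using la by (simp add: letter_assoc_def)
  also have "\<dots> = zmult (mapm h m) (Poly_Mapping.single a 1) (mapm h m b d)"
    by (simp add: cm_zmult s mapm_def)
  finally show "zmult (mapm h m) (mapm h m a b) (Poly_Mapping.single d 1)
      = zmult (mapm h m) (Poly_Mapping.single a 1) (mapm h m b d)" .
qed

lemma rhom_const_poly: "rhom (\<lambda>c::'c::comm_ring_1. [:c:])"
  by (simp add: rhom_def)

lemma rhom_const_poly2: "rhom (\<lambda>c::'c::comm_ring_1. [:[:c:]:])"
  by (simp add: rhom_def one_pCons)

lemma mult_t_eq: "mult_t m = mapm (\<lambda>c. [:c:]) m"
  by (simp add: mult_t_def mapm_def fun_eq_iff)

lemma mult_tt_eq: "mult_tt m = mapm (\<lambda>c. [:[:c:]:]) m"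
  by (simp add: mult_tt_def mapm_def fun_eq_iff)

lemma letter_assoc_mult_t: "letter_assoc m \<Longrightarrow> letter_assoc (mult_t m)"
  unfolding mult_t_eq by (rule letter_assoc_mapm[OF rhom_const_poly])

lemma letter_assoc_mult_tt: "letter_assoc m \<Longrightarrow> letter_assoc (mult_tt m)"
  unfolding mult_tt_eq by (rule letter_assoc_mapm[OF rhom_const_poly2])

lemma qalg_poly: "qalg TYPE('c::comm_ring_1) \<Longrightarrow> qalg TYPE('c poly)"
  unfolding qalg_def
proof (intro allI impI)
  fix k :: nat
  assume "\<forall>k. 0 < k \<longrightarrow> (\<exists>u::'c. of_nat k * u = 1)" "0 < k"
  then obtain u :: 'c where "of_nat k * u = 1" by blast
  then have "of_nat k * [:u:] = (1 :: 'c poly)" by (simp add: of_nat_poly one_pCons mult.commute)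
  then show "\<exists>u::'c poly. of_nat k * u = 1" ..
qed

lemma qinv_poly: "qalg TYPE('c::comm_ring_1) \<Longrightarrow> k > 0 \<Longrightarrow> (qinv k :: 'c poly) = [:qinv k:]"
proof (rule qinv_eq)
  assume "qalg TYPE('c)" "k > 0"
  then have "of_nat k * qinv k = (1::'c)" by (rule qinv_mult)
  then show "of_nat k * [:qinv k:] = (1::'c poly)" by (simp add: of_nat_poly one_pCons mult.commute)
qed


section \<open>The derivative of S^t\<close>

lemma coeff_dt: "coeff (dt p) k = of_nat (Suc k) * coeff p (Suc k)"
proof -
  have "coeff (dt p) k = (\<Sum>i\<le>degree p. if i - 1 = k then of_nat i * coeff p i else 0)"
    by (simp add: dt_def coeff_sum)
  also have "\<dots> = (\<Sum>i\<le>degree p. if i = Suc k then of_nat i * coeff p i else 0)"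
    by (rule sum.cong[OF refl]) (rename_tac i, case_tac i, auto)
  also have "\<dots> = of_nat (Suc k) * coeff p (Suc k)"
    by (simp add: sum.delta coeff_eq_0)
  finally show ?thesis .
qed

lemma dt_add: "dt (p + q) = dt p + dt q"
  by (rule poly_eqI) (simp add: coeff_dt algebra_simps)

lemma dt_zero [simp]: "dt 0 = 0"
  by (rule poly_eqI) (simp add: coeff_dt)

lemma dt_smult: "dt (smult c p) = smult c (dt p)"
  by (rule poly_eqI) (simp add: coeff_dt algebra_simps)

lemma dt_mult_const: "dt (p * [:c:]) = dt p * [:c:]"
  by (rule poly_eqI) (simp add: coeff_dt algebra_simps)

lemma dt_exp_coeff:
  assumes q: "qalg TYPE('c::comm_ring_1)"
  shows "dt (monom (qinv (fact (Suc j)) :: 'c) (Suc j)) = monom (qinv (fact j)) j"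
    and "dt (monom (qinv (fact 0) :: 'c) 0) = 0"
proof -
  have "dt (monom c (Suc j)) = monom (of_nat (Suc j) * c) j" for c :: 'c
    by (rule poly_eqI) (simp add: coeff_dt)
  then show "dt (monom (qinv (fact (Suc j)) :: 'c) (Suc j)) = monom (qinv (fact j)) j"
    by (simp only: qinv_fact_Suc[OF q])
  show "dt (monom (qinv (fact 0) :: 'c) 0) = 0"
    by (rule poly_eqI) (simp add: coeff_dt)
qed

lemma S_t_expansion:
  fixes m :: "'l \<Rightarrow> 'l \<Rightarrow> ('l \<Rightarrow>\<^sub>0 'r::comm_ring_1)"
  assumes la: "letter_assoc m" and q: "qalg TYPE('r)" and short: "words_shorter (Suc N) x"
  shows "Sop (mult_t m) [:0, 1:] (coeff_map (\<lambda>c. [:c:]) x)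
       = (\<Sum>j\<le>N. smul (monom (qinv (fact j)) j) (coeff_map (\<lambda>c. [:c:]) ((contr m ^^ j) x)))"
proof -
  have laT: "letter_assoc (mult_t m)" by (rule letter_assoc_mult_t[OF la])
  have "words_shorter (Suc N) (coeff_map (\<lambda>c. [:c:]) x)"
    using short keys_cm[of "\<lambda>c. [:c:]" x] by (auto simp: words_shorter_def)
  then have "Sop (mult_t m) [:0, 1:] (coeff_map (\<lambda>c. [:c:]) x)
      = series_at (mult_t m) N (expser [:0, 1:]) (coeff_map (\<lambda>c. [:c:]) x)"
    by (rule S_exp[OF laT qalg_poly[OF q]])
  also have "\<dots> = (\<Sum>j\<le>N. smul (monom (qinv (fact j)) j) (coeff_map (\<lambda>c. [:c:]) ((contr m ^^ j) x)))"
    unfolding series_at_def mult_t_eq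
    by (simp add: expser_def qinv_poly[OF q] monom_altdef cm_contr_pow[OF rhom_const_poly])
  finally show ?thesis .
qed

lemma logS_mult_t:
  fixes m :: "'l \<Rightarrow> 'l \<Rightarrow> ('l \<Rightarrow>\<^sub>0 'r::comm_ring_1)"
  assumes la: "letter_assoc m" and q: "qalg TYPE('r)"
  shows "logS (mult_t m) (coeff_map (\<lambda>c. [:c:]) x) = coeff_map (\<lambda>c. [:c:]) (contr m x)"
proof -
  have laT: "letter_assoc (mult_t m)" by (rule letter_assoc_mult_t[OF la])
  have "logS (mult_t m) (coeff_map (\<lambda>c. [:c:]) x) = contr (mult_t m) (coeff_map (\<lambda>c. [:c:]) x)"
    by (rule logS_eq_contr[OF laT qalg_poly[OF q]])
  also have "\<dots> = coeff_map (\<lambda>c. [:c:]) (contr m x)"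
    by (simp add: cm_contr[OF rhom_const_poly] mult_t_eq)
  finally show ?thesis .
qed

text \<open>d/dt S^t(x) = S^t(contr x), by termwise differentiation of exp(t contr).\<close>
theorem dt_S:
  fixes m :: "'l \<Rightarrow> 'l \<Rightarrow> ('l \<Rightarrow>\<^sub>0 'r::comm_ring_1)"
  assumes la: "letter_assoc m" and q: "qalg TYPE('r)"
  shows "coeff_map dt (Sop (mult_t m) [:0, 1:] (coeff_map (\<lambda>c. [:c:]) x))
       = Sop (mult_t m) [:0, 1:] (coeff_map (\<lambda>c. [:c:]) (contr m x))"
proof -
  obtain N where short: "words_shorter (Suc N) x"
    using words_shorter_exists[of x] words_shorter_mono le_SucI by blast
  have short': "words_shorter (Suc N) (contr m x)"
    using words_shorter_contr[OF short] by (rule words_shorter_mono) simp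
  define P where "P j = (monom (qinv (fact j)) j :: 'r poly)" for j
  define Z where "Z j = coeff_map (\<lambda>c. [:c:]) ((contr m ^^ j) x)" for j
  have "coeff_map dt (smul p (Z j)) = smul (dt p) (Z j)" for p j
    by (rule poly_mapping_eqI) (simp add: Z_def lookup_cm dt_mult_const dt_smult mult.commute[of p])
  then have "coeff_map dt (Sop (mult_t m) [:0, 1:] (coeff_map (\<lambda>c. [:c:]) x))
      = (\<Sum>j\<le>N. smul (dt (P j)) (Z j))"
    by (simp add: S_t_expansion[OF la q short] cm_sum dt_add P_def Z_def)
  also have "\<dots> = (\<Sum>i<N. smul (P i) (Z (Suc i)))"
    unfolding lessThan_Suc_atMost[symmetric] sum.lessThan_Suc_shift
    by (simp only: P_def dt_exp_coeff[OF q] smul_zero_left add_0_left)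
  also have "\<dots> = (\<Sum>j\<le>N. smul (P j) (Z (Suc j)))"
    using contr_pow_vanish[OF short, of "Suc N"] by (simp add: Z_def lessThan_Suc_atMost[symmetric])
  also have "\<dots> = Sop (mult_t m) [:0, 1:] (coeff_map (\<lambda>c. [:c:]) (contr m x))"
    using S_t_expansion[OF la q short'] by (simp add: P_def Z_def funpow_swap1)
  finally show ?thesis .
qed


section \<open>Contractions with \<sigma>(r) = 1\<close>

text \<open>The word with its pair at positions j, j+1 (counted from 1) contracted.\<close>
definition single_contr :: "('l \<Rightarrow> 'l \<Rightarrow> ('l \<Rightarrow>\<^sub>0 'c::comm_ring_1)) \<Rightarrow> nat \<Rightarrow> 'l list \<Rightarrow> ('l list \<Rightarrow>\<^sub>0 'c)" where
  "single_contr m j w = foldr prepend (take (j - 1) w) (liftw (drop (j + 1) w) (m (w ! (j - 1)) (w ! j)))"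

lemma contr_w_single_contr: "contr_w m w = (\<Sum>j\<in>{1..<length w}. single_contr m j w)"
proof (induction w)
  case (Cons a w)
  show ?case
  proof (cases w)
    case Nil
    then show ?thesis by (simp add: linD_zero)
  next
    case (Cons b v)
    have shift: "prepend a (single_contr m j w) = single_contr m (Suc j) (a # w)" if "1 \<le> j" for j
      using that by (cases j) (simp_all add: single_contr_def)
    have shifted: "(\<Sum>j\<in>{1..<length w}. prepend a (single_contr m j w))
        = (\<Sum>j\<in>{1..<length w}. single_contr m (Suc j) (a # w))"
      by (rule sum.cong) (auto simp: shift)
    have first: "act m a (wd w) = single_contr m 1 (a # w)"
      using Cons by (simp add: single_contr_def)
    have "contr_w m (a # w) = prepend a (contr_w m w) + act m a (wd w)"
      by simp
    also have "\<dots> = (\<Sum>j\<in>{1..<length w}. single_contr m (Suc j) (a # w)) + single_contr m 1 (a # w)"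
      by (simp only: Cons.IH linD_sum[OF linear_prepend] shifted first)
    also have "\<dots> = (\<Sum>j\<in>{Suc 1..<Suc (length w)}. single_contr m j (a # w)) + single_contr m 1 (a # w)"
      by (simp only: sum.shift_bounds_Suc_ivl)
    also have "\<dots> = (\<Sum>j\<in>{1..<length (a # w)}. single_contr m j (a # w))"
      using sum.atLeast_Suc_lessThan[of 1 "Suc (length w)" "\<lambda>j. single_contr m j (a # w)"] Cons
      by (simp add: add.commute)
    finally show ?thesis .
  qed
qed simp

text \<open>The sequence (0, ..., j-1, j+1, ..., n), the unique r \<in> R_n with \<sigma>(r) = 1 missing j.\<close>
definition skip_seq :: "nat \<Rightarrow> nat \<Rightarrow> nat list" where
  "skip_seq n j = [0..<j] @ [Suc j..<Suc n]"

lemma set_skip_seq: "j \<le> n \<Longrightarrow> set (skip_seq n j) = {0..n} - {j}"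
  by (auto simp: skip_seq_def)

lemma sorted_skip_seq: "sorted_wrt (<) (skip_seq n j)"
  by (auto simp: skip_seq_def sorted_wrt_append)

lemma skip_seq_nth: "i < n \<Longrightarrow> skip_seq n j ! i = (if i < j then i else Suc i)"
  by (simp add: skip_seq_def nth_append del: upt_Suc)

lemma skip_seq_in:
  assumes "1 \<le> j" "j < n"
  shows "skip_seq n j \<in> {r \<in> Rseq n. sigma n r = 1}"
proof -
  have "hd (skip_seq n j) = 0" "last (skip_seq n j) = n" "length (skip_seq n j) = n"
    "skip_seq n j \<noteq> []"
    using assms by (simp_all add: skip_seq_def)
  moreover have "set (skip_seq n j) \<subseteq> {0..n}" using assms by (simp add: set_skip_seq)
  ultimately show ?thesis using assms sorted_skip_seq[of n j] by (simp add: Rseq_def sigma_def)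
qed

lemma skip_seq_surj:
  assumes r: "r \<in> Rseq n" and s: "sigma n r = 1"
  shows "\<exists>j\<in>{1..<n}. r = skip_seq n j"
proof -
  have ne: "r \<noteq> []" and sw: "sorted_wrt (<) r" and sub: "set r \<subseteq> {0..n}"
    and h: "hd r = 0" and l: "last r = n"
    using r by (auto simp: Rseq_def)
  have d: "distinct r" using sw by (simp add: strict_sorted_iff)
  have "card (set r) \<le> card {0..n}" using sub by (intro card_mono) auto
  then have len: "length r \<le> Suc n" using distinct_card[OF d] by simp
  have n1: "n \<ge> 1" using s by (cases n) (auto simp: sigma_def)
  have l1: "length r \<ge> 1" using ne by (cases r) auto
  have "n - (length r - 1) = 1" using s by (simp add: sigma_def)
  then have lr: "length r = n" using l1 len n1 by linarith
  have "card ({0..n} - set r) = 1"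
    using sub distinct_card[OF d] lr by (simp add: card_Diff_subset)
  then obtain j where j: "{0..n} - set r = {j}" by (rule card_1_singletonE)
  have r0: "0 \<in> set r" using hd_in_set[OF ne] h by simp
  have rn: "n \<in> set r" using last_in_set[OF ne] l by simp
  have jn: "j \<le> n" and jnr: "j \<notin> set r" using j by auto
  have "j \<notin> {0, n}" using r0 rn jnr by blast
  then have jr: "1 \<le> j" "j < n" using jn by auto
  have "set r = {0..n} - {j}" using j sub jnr by blast
  then have "r = skip_seq n j"
    using jn by (intro strict_sorted_equal[OF sorted_skip_seq sw]) (simp add: set_skip_seq)
  then show ?thesis using jr by auto
qed

lemma skip_seq_inj: "inj_on (skip_seq n) {1..<n}"
proof
  fix i j
  assume i: "i \<in> {1..<n}" and j: "j \<in> {1..<n}" and eq: "skip_seq n i = skip_seq n j"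
  have "set (skip_seq n i) = {0..n} - {i}" "set (skip_seq n j) = {0..n} - {j}"
    using i j by (simp_all add: set_skip_seq)
  then have "(i \<in> {0..n} - {i}) = (i \<in> {0..n} - {j})" using eq by simp
  then show "i = j" using i by simp
qed

lemma skip_seq_bij: "bij_betw (skip_seq n) {1..<n} {r \<in> Rseq n. sigma n r = 1}"
  unfolding bij_betw_def
proof
  show "skip_seq n ` {1..<n} = {r \<in> Rseq n. sigma n r = 1}"
  proof
    show "skip_seq n ` {1..<n} \<subseteq> {r \<in> Rseq n. sigma n r = 1}"
      using skip_seq_in by auto
    show "{r \<in> Rseq n. sigma n r = 1} \<subseteq> skip_seq n ` {1..<n}"
      using skip_seq_surj by blast
  qed
qed (rule skip_seq_inj)

abbreviation sg :: "'l \<Rightarrow> ('l \<Rightarrow>\<^sub>0 'c::comm_ring_1)" where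
  "sg a \<equiv> Poly_Mapping.single a 1"

lemma wprod_append: "wprod (map sg xs @ L) = foldr prepend xs (wprod (L :: ('l \<Rightarrow>\<^sub>0 'c::comm_ring_1) list))"
  by (induction xs) simp_all

lemma wprod_sg: "wprod (map sg ys) = (wd ys :: 'l list \<Rightarrow>\<^sub>0 'c::comm_ring_1)"
  by (induction ys) simp_all

lemma skip_seq_blocks:
  assumes j: "1 \<le> j" "j < length w"
  shows "map (\<lambda>i. zprod m (take (skip_seq (length w) j ! (i + 1) - skip_seq (length w) j ! i)
                          (drop (skip_seq (length w) j ! i) w))) [0..<length w - 1]
       = map sg (take (j - 1) w) @ [m (w ! (j - 1)) (w ! j)] @ map sg (drop (j + 1) w)"
  (is "map ?b _ = ?rhs")
proof (rule nth_equalityI)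
  show "length (map ?b [0..<length w - 1]) = length ?rhs" using j by simp
next
  fix i
  assume "i < length (map ?b [0..<length w - 1])"
  then have i: "i < length w - 1" by simp
  have take1: "take (Suc 0) (drop k w) = [w ! k]" if "k < length w" for k
    using that by (simp add: Cons_nth_drop_Suc[symmetric])
  consider "i < j - 1" | "i = j - 1" | "i > j - 1" by linarith
  then show "map ?b [0..<length w - 1] ! i = ?rhs ! i"
  proof cases
    case 1
    then have "skip_seq (length w) j ! i = i" "skip_seq (length w) j ! (i + 1) = i + 1"
      using i j by (simp_all add: skip_seq_nth)
    then show ?thesis using 1 i j by (simp add: nth_append take1)
  next
    case 2
    have "take 2 (drop (j - 1) w) = [w ! (j - 1), w ! j]"
      using j by (simp add: Cons_nth_drop_Suc[symmetric] numeral_2_eq_2)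
    moreover have "skip_seq (length w) j ! i = j - 1" "skip_seq (length w) j ! (i + 1) = j + 1"
      using 2 i j by (simp_all add: skip_seq_nth)
    ultimately show ?thesis using 2 i j by (simp add: nth_append zmult_single_left)
  next
    case 3
    then have "skip_seq (length w) j ! i = i + 1" "skip_seq (length w) j ! (i + 1) = i + 2"
      using i j by (simp_all add: skip_seq_nth)
    moreover have "drop (j + 1) w ! (i - j) = w ! (i + 1)" using 3 i j by simp
    ultimately show ?thesis using 3 i j by (simp add: nth_append take1)
  qed
qed

lemma Con_skip_seq:
  assumes j: "1 \<le> j" "j < length w"
  shows "Con m (skip_seq (length w) j) w = single_contr m j w"
  using j skip_seq_blocks[OF j, of m]
  by (simp add: Con_def skip_seq_def wprod_append wprod_sg single_contr_def liftw_def)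

theorem contr_w_Con: "contr_w m w = (\<Sum>r\<in>{r\<in>Rseq (length w). sigma (length w) r = 1}. Con m r w)"
proof -
  have "(\<Sum>r\<in>{r\<in>Rseq (length w). sigma (length w) r = 1}. Con m r w)
      = (\<Sum>j\<in>{1..<length w}. Con m (skip_seq (length w) j) w)"
    by (rule sum.reindex_bij_betw[OF skip_seq_bij, symmetric])
  also have "\<dots> = (\<Sum>j\<in>{1..<length w}. single_contr m j w)"
    by (rule sum.cong) (auto simp: Con_skip_seq)
  finally show ?thesis by (simp add: contr_w_single_contr)
qed


theorem corollary3p4:
  fixes m :: "'l \<Rightarrow> 'l \<Rightarrow> ('l \<Rightarrow>\<^sub>0 'r::comm_ring_1)"
  assumes Qalg: "\<And>k::nat. k > 0 \<Longrightarrow> \<exists>u::'r. of_nat k * u = 1"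
    and comm: "\<And>a b. m a b = m b a"
    and assoc: "\<And>x y z. zmult m (zmult m x y) z = zmult m x (zmult m y z)"
  shows
    "(\<forall>x. Sop (mult_t m) [:0, 1:] x = expLogS (mult_t m) [:0, 1:] x)
     \<and> (\<forall>x. Sop (mult_tt m) ([:[:0, 1:]:] + [:0, 1:]) x
            = Sop (mult_tt m) [:[:0, 1:]:] (Sop (mult_tt m) [:0, 1:] x))
     \<and> (\<forall>x. Sop (mult_t m) (- [:0, 1:]) (Sop (mult_t m) [:0, 1:] x) = x
            \<and> Sop (mult_t m) [:0, 1:] (Sop (mult_t m) (- [:0, 1:]) x) = x)
     \<and> (\<forall>n w. length w = n \<longrightarrow>
          coeff_map dt (Sop (mult_t m) [:0, 1:] (wd w))
            = Sop (mult_t m) [:0, 1:] (logS (mult_t m) (wd w))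
          \<and> Sop (mult_t m) [:0, 1:] (logS (mult_t m) (wd w))
            = (\<Sum>r\<in>{r\<in>Rseq n. sigma n r = 1}.
                 Sop (mult_t m) [:0, 1:] (coeff_map (\<lambda>c. [:c:]) (Con m r w))))"
proof -
  have q: "qalg TYPE('r)" using Qalg by (simp add: qalg_def)
  have la: "letter_assoc m" using assoc by (rule letter_assoc_of_assoc)
  have laT: "letter_assoc (mult_t m)" by (rule letter_assoc_mult_t[OF la])
  have laTT: "letter_assoc (mult_tt m)" by (rule letter_assoc_mult_tt[OF la])
  have log_t: "logS (mult_t m) (wd w) = coeff_map (\<lambda>c. [:c:]) (contr m (wd w))" for w
    using logS_mult_t[OF la q, of "wd w"] by (simp add: rhom_const_poly)
  have deriv: "coeff_map dt (Sop (mult_t m) [:0, 1:] (wd w))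
             = Sop (mult_t m) [:0, 1:] (logS (mult_t m) (wd w))" for w
    using dt_S[OF la q, of "wd w"] by (simp add: log_t rhom_const_poly)
  show ?thesis
    using expLogS_eq_S[OF laT qalg_poly[OF q]] S_add[OF laT] S_add[OF laTT] deriv
    by (simp add: S_zero log_t contr_w_Con cm_sum linD_sum)
qed

end
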